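(* For all positive integers $d$ and $p$, (i) $\displaystyle \left|B(d,p)\cap\mathbb{P}^d_\circ\right|=\frac{1}{2}\sum_{j=1}^{d}2^j\binom{d}{j}\sum_{i=j}^{p}c_\psi(i,j)$, and (ii) $\displaystyle \kappa\!\left(B(d,p)\cap\mathbb{P}^d_\circ\right)=\frac{1}{2d}\sum_{j=1}^{d}2^j\binom{d}{j}\sum_{i=j}^{p}i\,c_\psi(i,j)$, where for positive integers $p,d$, $$c_\psi(p,d)=\frac{1}{(d-1)!}\sum_{i=1}^{d}s(d,i)\,J_{i-1}(p).$$
   Context: A point of $\mathbb{Z}^d$ is primitive if its coordinates are relatively prime; $\mathbb{P}^d$ is the set of primitive points of $\mathbb{Z}^d$, and $\mathbb{P}^d_\circ$ is the set of points of $\mathbb{P}^d$ whose first non-zero coordinate is positive. $B(d,p)=\{x\in\mathbb{R}^d:\|x\|_1\le p\}$. For a finite set $\mathcal{X}\subset\mathbb{R}^d$, $\kappa(\mathcal{X})=\max_{1\le i\le d}\sum_{x\in\mathcal{X}}|x_i|$. $J_q$ is Jordan's totient function: $J_q(p)=p^q\prod_{n}(1-n^{-q})$, the product over the primes $n$ dividing $p$ (so $J_0(1)=1$ and $J_0(p)=0$ for $p>1$). $s(d,i)$ are the (signed) Stirling numbers of the first kind, given by $s(d+1,i)=-d\,s(d,i)+s(d,i-1)$, $s(i,i)=1$, and $s(d,0)=0$ for $d>0$. *)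

theory Defs
  imports "HOL-Analysis.Analysis" "HOL-Combinatorics.Stirling" "HOL-Computational_Algebra.Primes"
begin

text \<open>Points of Z^d are represented as integer lists of length d.\<close>

definition primitive :: "int list \<Rightarrow> bool" where
  "primitive x \<longleftrightarrow> Gcd (set x) = 1"

definition first_nonzero_pos :: "int list \<Rightarrow> bool" where
  "first_nonzero_pos x \<longleftrightarrow> (\<exists>k<length x. (\<forall>i<k. x ! i = 0) \<and> x ! k > 0)"

definition BP :: "nat \<Rightarrow> nat \<Rightarrow> int list set" where
  "BP d p = {x. length x = d \<and> (\<Sum>i<d. \<bar>x ! i\<bar>) \<le> int p \<and> primitive x \<and> first_nonzero_pos x}"

definition kappa :: "nat \<Rightarrow> int list set \<Rightarrow> int" where
  "kappa d X = Max ((\<lambda>i. \<Sum>x\<in>X. \<bar>x ! i\<bar>) ` {..<d})"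

definition jordan :: "nat \<Rightarrow> nat \<Rightarrow> real" where
  "jordan q p = real p ^ q * (\<Prod>n\<in>{n. prime n \<and> n dvd p}. (1 - 1 / real n ^ q))"

definition stirling_s :: "nat \<Rightarrow> nat \<Rightarrow> int" where
  "stirling_s d i = (-1) ^ (d - i) * int (stirling d i)"

definition c_psi :: "nat \<Rightarrow> nat \<Rightarrow> real" where
  "c_psi p d = 1 / fact (d - 1) * (\<Sum>i=1..d. real_of_int (stirling_s d i) * jordan (i - 1) p)"

end

theory Submission
  imports Defs "HOL-Combinatorics.Permutations"
begin

text \<open>
  Sort the points by their l1-norm n. A point of Z^d of norm n is a support of size j, a sign
  on each support coordinate and a composition of n into j positive parts, so there are
  sum_j 2^j C(d,j) C(n-1,j-1) of them. It is primitive iff no prime factor of n divides all its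
  coordinates, so inclusion-exclusion over the prime factors of n counts the primitive ones.
  Expanding C(m-1,j-1) as a polynomial in m with Stirling coefficients, the resulting alternating
  sums of powers of n/k over squarefree divisors k of n are Jordan totients, and the count of
  primitive points of norm n becomes sum_j 2^j C(d,j) c_psi(n,j). Summing over n <= p counts the
  primitive points of B(d,p), and x -> -x halves this to those with positive first non-zero
  coordinate. For kappa, permuting coordinates shows that all coordinate sums agree, so d kappa
  is half the total l1-norm, which is the same sum weighted by n.
\<close>

lemma sum_stirling_s_power:
  "(\<Sum>i\<le>j. of_int (stirling_s j i) * x ^ i) = pochhammer (x - of_nat j + 1) j"
  for x :: "'a::comm_ring_1"
proof -
  have "of_int (stirling_s j i) * x ^ i = (-1) ^ j * (of_nat (stirling j i) * (-x) ^ i)"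
    if "i \<le> j" for i
  proof -
    have "(-1::'a) ^ j = (-1) ^ (j - i) * (-1) ^ i"
      using that by (simp flip: power_add)
    moreover have "(-1::'a) ^ i * (-1) ^ i = 1"
      by (simp flip: power_add)
    ultimately show ?thesis
      by (simp add: stirling_s_def power_minus[of x] mult.assoc mult.left_commute[of "(-1) ^ i"])
  qed
  then have "(\<Sum>i\<le>j. of_int (stirling_s j i) * x ^ i)
      = (-1) ^ j * (\<Sum>i\<le>j. of_nat (stirling j i) * (-x) ^ i)"
    by (simp add: sum_distrib_left)
  also have "\<dots> = pochhammer (x - of_nat j + 1) j"
    by (simp add: stirling_pochhammer pochhammer_minus)
  finally show ?thesis .
qed

lemma stirling_s_poly_eq_binomial:
  assumes "j \<ge> 1" "m \<ge> 1"
  shows "1 / fact (j - 1) * (\<Sum>i=1..j. real_of_int (stirling_s j i) * real m ^ (i - 1))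
           = real (m - 1 choose (j - 1))"
proof -
  obtain k where j: "j = Suc k" using assms(1) by (cases j) auto
  have "{..j} = insert 0 {1..j}" by auto
  then have "(\<Sum>i\<le>j. real_of_int (stirling_s j i) * real m ^ i)
      = (\<Sum>i=1..j. real_of_int (stirling_s j i) * real m ^ i)"
    using assms by (simp add: stirling_s_def)
  also have "\<dots> = real m * (\<Sum>i=1..j. real_of_int (stirling_s j i) * real m ^ (i - 1))"
    unfolding sum_distrib_left by (rule sum.cong) (auto simp: power_eq_if)
  finally have "real m * (\<Sum>i=1..j. real_of_int (stirling_s j i) * real m ^ (i - 1))
      = pochhammer (real m - real j + 1) j"
    by (simp add: sum_stirling_s_power)
  also have "\<dots> = real m * pochhammer (real (m - 1) - real k + 1) k"
    using assms by (simp add: j pochhammer_rec' algebra_simps)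
  also have "\<dots> = real m * (fact k * real (m - 1 choose k))"
    by (simp add: binomial_gbinomial gbinomial_pochhammer')
  finally show ?thesis
    using assms by (simp add: j)
qed

lemma prod_primes_dvd_iff:
  fixes A :: "'a::factorial_semiring_gcd set"
  assumes "finite A" "\<And>p. p \<in> A \<Longrightarrow> prime p"
  shows "\<Prod>A dvd c \<longleftrightarrow> (\<forall>p\<in>A. p dvd c)"
  using assms
proof (induction A rule: finite_induct)
  case (insert p A)
  have "coprime p (\<Prod>A)"
    using insert by (intro prod_coprime_right primes_coprime) auto
  then have "p * \<Prod>A dvd c \<longleftrightarrow> p dvd c \<and> \<Prod>A dvd c"
    by (meson divides_mult dvd_mult_left dvd_mult_right)
  with insert show ?case by simp
qed simp

lemma prod_subset_prime_factors_dvd: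
  fixes n :: "'a::factorial_semiring_gcd"
  assumes "U \<subseteq> prime_factors n"
  shows "\<Prod>U dvd n"
  using assms finite_subset[OF assms] by (subst prod_primes_dvd_iff) auto

lemma div_prod_subset_prime_factors_pos:
  fixes n :: nat
  assumes "n > 0" "U \<subseteq> prime_factors n"
  shows "n div \<Prod>U > 0"
  using prod_subset_prime_factors_dvd[OF assms(2)] assms(1)
  by (metis dvd_div_eq_0_iff gr0I not_gr0)

lemma alternating_sum_Pow:
  assumes "finite T"
  shows "(\<Sum>U\<in>Pow T. (-1::'a::comm_ring_1) ^ card U) = (if T = {} then 1 else 0)"
proof -
  have "(\<Prod>x\<in>T. (-1::'a) + 1) = (\<Sum>U\<in>Pow T. (-1) ^ card U)"
    by (subst prod_add[OF assms]) simp
  then show ?thesis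
    using assms by (simp add: power_0_left card_eq_0_iff)
qed

lemma card_avoiding_inclusion_exclusion:
  assumes "finite S" "finite P"
  shows "(of_nat (card {x\<in>S. \<forall>p\<in>P. \<not> R p x}) :: 'a::comm_ring_1)
           = (\<Sum>U\<in>Pow P. (-1) ^ card U * of_nat (card {x\<in>S. \<forall>p\<in>U. R p x}))"
proof -
  define T where "T x = {p\<in>P. R p x}" for x
  have "{x\<in>S. \<forall>p\<in>P. \<not> R p x} = {x\<in>S. T x = {}}"
    by (auto simp: T_def)
  then have "of_nat (card {x\<in>S. \<forall>p\<in>P. \<not> R p x}) = (\<Sum>x\<in>{x\<in>S. T x = {}}. 1::'a)"
    by simp
  also have "\<dots> = (\<Sum>x\<in>S. if T x = {} then 1 else 0)"
    by (rule sum.inter_filter[OF assms(1)])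
  also have "\<dots> = (\<Sum>x\<in>S. \<Sum>U\<in>Pow P. if U \<subseteq> T x then (-1) ^ card U else 0)"
  proof (rule sum.cong)
    fix x
    have "Pow (T x) = {U \<in> Pow P. U \<subseteq> T x}"
      by (auto simp: T_def)
    then have "(\<Sum>U\<in>Pow (T x). (-1::'a) ^ card U) = (\<Sum>U\<in>Pow P. if U \<subseteq> T x then (-1) ^ card U else 0)"
      using assms(2) by (simp only:) (rule sum.inter_filter, simp)
    moreover have "finite (T x)"
      using assms(2) by (simp add: T_def)
    ultimately show "(if T x = {} then 1 else 0) = (\<Sum>U\<in>Pow P. if U \<subseteq> T x then (-1::'a) ^ card U else 0)"
      by (metis alternating_sum_Pow)
  qed simp
  also have "\<dots> = (\<Sum>U\<in>Pow P. \<Sum>x\<in>S. if U \<subseteq> T x then (-1) ^ card U else 0)"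
    by (rule sum.swap)
  also have "\<dots> = (\<Sum>U\<in>Pow P. (-1) ^ card U * of_nat (card {x\<in>S. \<forall>p\<in>U. R p x}))"
  proof (rule sum.cong)
    fix U assume "U \<in> Pow P"
    then have "{x\<in>S. U \<subseteq> T x} = {x\<in>S. \<forall>p\<in>U. R p x}"
      by (auto simp: T_def)
    then show "(\<Sum>x\<in>S. if U \<subseteq> T x then (-1) ^ card U else 0)
        = (-1) ^ card U * (of_nat (card {x\<in>S. \<forall>p\<in>U. R p x}) :: 'a)"
      by (simp flip: sum.inter_filter[OF assms(1)])
  qed simp
  finally show ?thesis .
qed

lemma jordan_eq_alternating_sum:
  assumes "n > 0"
  shows "jordan q n = (\<Sum>U\<in>Pow (prime_factors n). (-1) ^ card U * real (n div \<Prod>U) ^ q)"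
proof -
  have "{p. prime p \<and> p dvd n} = prime_factors n"
    using assms by (auto simp: in_prime_factors_iff)
  then have "jordan q n = real n ^ q * (\<Prod>p\<in>prime_factors n. - (1 / real p ^ q) + 1)"
    by (simp add: jordan_def)
  also have "\<dots> = real n ^ q * (\<Sum>U\<in>Pow (prime_factors n).
                      (\<Prod>p\<in>U. - (1 / real p ^ q)) * (\<Prod>p\<in>prime_factors n - U. 1))"
    by (subst prod_add) simp_all
  also have "\<dots> = (\<Sum>U\<in>Pow (prime_factors n). (-1) ^ card U * real (n div \<Prod>U) ^ q)"
    unfolding sum_distrib_left
  proof (rule sum.cong)
    fix U assume U: "U \<in> Pow (prime_factors n)"
    have "(\<Prod>p\<in>U. - (1 / real p ^ q)) = (\<Prod>p\<in>U. (-1) * (1 / real p ^ q))"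
      by simp
    also have "\<dots> = (-1) ^ card U * (\<Prod>p\<in>U. 1 / real p ^ q)"
      by (simp only: prod.distrib prod_constant)
    also have "\<dots> = (-1) ^ card U / real (\<Prod>U) ^ q"
      by (simp add: prod_dividef prod_power_distrib)
    finally have "(\<Prod>p\<in>U. - (1 / real p ^ q)) = (-1) ^ card U / real (\<Prod>U) ^ q" .
    moreover have "real (n div \<Prod>U) = real n / real (\<Prod>U)"
      using U by (simp add: real_of_nat_div prod_subset_prime_factors_dvd)
    ultimately show "real n ^ q * ((\<Prod>p\<in>U. - (1 / real p ^ q)) * (\<Prod>p\<in>prime_factors n - U. 1))
        = (-1) ^ card U * real (n div \<Prod>U) ^ q"
      by (simp add: power_divide)
  qed simp
  finally show ?thesis .
qed

text \<open>Compositions of m into j positive parts, counted by the sum t < m of all parts but the last.\<close>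

fun num_compositions :: "nat \<Rightarrow> nat \<Rightarrow> nat" where
  "num_compositions m 0 = (if m = 0 then 1 else 0)"
| "num_compositions m (Suc j) = (\<Sum>t<m. num_compositions t j)"

lemma num_compositions_Suc_Suc: "num_compositions (Suc m) (Suc j) = m choose j"
proof (induction j arbitrary: m)
  case 0
  have "(\<Sum>t<Suc m. num_compositions t 0) = (\<Sum>t<Suc m. if t = 0 then 1 else 0)"
    by (rule sum.cong) auto
  then show ?case
    by simp
next
  case (Suc j)
  have "num_compositions (Suc m) (Suc (Suc j)) = (\<Sum>t<m. num_compositions (Suc t) (Suc j))"
    by (simp only: num_compositions.simps sum.lessThan_Suc_shift) simp
  also have "\<dots> = m choose Suc j"
    using Suc by (cases m) (simp_all add: lessThan_Suc_atMost sum_choose_upper)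
  finally show ?case .
qed

lemma num_compositions_eq_binomial:
  "m \<ge> 1 \<Longrightarrow> j \<ge> 1 \<Longrightarrow> num_compositions m j = (m - 1 choose (j - 1))"
  using num_compositions_Suc_Suc[of "m - 1" "j - 1"] by simp

definition norm1 :: "int list \<Rightarrow> int" where
  "norm1 x = sum_list (map abs x)"

definition l1_sphere :: "nat \<Rightarrow> nat \<Rightarrow> int list set" where
  "l1_sphere d m = {x. length x = d \<and> norm1 x = int m}"

lemma norm1_Nil [simp]: "norm1 [] = 0"
  by (simp add: norm1_def)

lemma norm1_Cons [simp]: "norm1 (a # x) = \<bar>a\<bar> + norm1 x"
  by (simp add: norm1_def)

lemma norm1_nonneg: "norm1 x \<ge> 0"
  by (induction x) auto

lemma abs_le_norm1: "c \<in> set x \<Longrightarrow> \<bar>c\<bar> \<le> norm1 x"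
  by (induction x) (auto simp: add_increasing add_increasing2 norm1_nonneg)

lemma norm1_pos: "\<exists>c\<in>set x. c \<noteq> 0 \<Longrightarrow> norm1 x > 0"
  using abs_le_norm1 by (meson less_le_trans zero_less_abs_iff)

lemma norm1_eq_sum_nth: "norm1 x = (\<Sum>i<length x. \<bar>x ! i\<bar>)"
  by (simp add: norm1_def sum_list_sum_nth atLeast0LessThan)

lemma norm1_mset_eq: "mset y = mset x \<Longrightarrow> norm1 y = norm1 x"
  unfolding norm1_def by (metis mset_map sum_mset_sum_list)

lemma norm1_uminus [simp]: "norm1 (map uminus x) = norm1 x"
  by (simp add: norm1_def o_def)

lemma norm1_scale: "norm1 (map ((*) k) x) = \<bar>k\<bar> * norm1 x"
  by (induction x) (auto simp: abs_mult algebra_simps)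

lemma dvd_norm1: "(\<And>c. c \<in> set x \<Longrightarrow> k dvd c) \<Longrightarrow> k dvd norm1 x"
  by (induction x) auto

lemma finite_l1_sphere: "finite (l1_sphere d m)"
proof (rule finite_subset)
  show "l1_sphere d m \<subseteq> {x. set x \<subseteq> {-int m..int m} \<and> length x = d}"
    using abs_le_norm1 by (fastforce simp: l1_sphere_def abs_le_iff)
  show "finite {x. set x \<subseteq> {-int m..int m} \<and> length x = d}"
    by (rule finite_lists_length_eq) simp
qed

lemma card_abs_eq: "card {a::int. \<bar>a\<bar> = int k} = (if k = 0 then 1 else 2)"
proof -
  have "{a::int. \<bar>a\<bar> = int k} = {int k, - int k}"
    by auto
  then show ?thesis
    by simp
qed

lemma l1_sphere_Suc:
  "l1_sphere (Suc d) m = (\<Union>t\<le>m. (\<lambda>(a, y). a # y) ` ({a. \<bar>a\<bar> = int (m - t)} \<times> l1_sphere d t))"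
proof (intro equalityI subsetI)
  fix x assume "x \<in> l1_sphere (Suc d) m"
  then obtain a y where x: "x = a # y" "length y = d" "\<bar>a\<bar> + norm1 y = int m"
    unfolding l1_sphere_def by (cases x) auto
  then have "nat (norm1 y) \<le> m" "\<bar>a\<bar> = int (m - nat (norm1 y))" "norm1 y = int (nat (norm1 y))"
    using norm1_nonneg[of y] by auto
  with x show "x \<in> (\<Union>t\<le>m. (\<lambda>(a, y). a # y) ` ({a. \<bar>a\<bar> = int (m - t)} \<times> l1_sphere d t))"
    unfolding l1_sphere_def by (auto intro!: bexI[of _ "nat (norm1 y)"] image_eqI[of _ _ "(a, y)"])
qed (auto simp: l1_sphere_def)

lemma card_l1_sphere_Suc:
  "card (l1_sphere (Suc d) m) = card (l1_sphere d m) + 2 * (\<Sum>t<m. card (l1_sphere d t))"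
proof -
  define F where "F t = (\<lambda>(a, y). a # y) ` ({a. \<bar>a\<bar> = int (m - t)} \<times> l1_sphere d t)" for t
  have card_F: "card (F t) = (if t = m then 1 else 2) * card (l1_sphere d t)" if "t \<le> m" for t
  proof -
    have "inj_on (\<lambda>(a, y). a # y) ({a. \<bar>a\<bar> = int (m - t)} \<times> l1_sphere d t)"
      by (auto simp: inj_on_def)
    then show ?thesis
      using that card_abs_eq[of "m - t"]
      by (simp add: F_def card_image card_cartesian_product del: of_nat_diff)
  qed
  have "card (l1_sphere (Suc d) m) = (\<Sum>t\<le>m. card (F t))"
    unfolding l1_sphere_Suc F_def[symmetric]
  proof (rule card_UN_disjoint)
    have "finite {a::int. \<bar>a\<bar> = k}" for k
      by (rule finite_subset[of _ "{-k..k}"]) auto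
    then show "\<forall>t\<in>{..m}. finite (F t)"
      by (simp add: F_def finite_l1_sphere)
    show "\<forall>s\<in>{..m}. \<forall>t\<in>{..m}. s \<noteq> t \<longrightarrow> F s \<inter> F t = {}"
      by (auto simp: F_def l1_sphere_def)
  qed simp
  also have "\<dots> = card (l1_sphere d m) + (\<Sum>t<m. 2 * card (l1_sphere d t))"
    by (simp add: lessThan_Suc_atMost[symmetric] card_F)
  finally show ?thesis
    by (simp add: sum_distrib_left)
qed

lemma card_l1_sphere: "card (l1_sphere d m) = (\<Sum>j\<le>d. 2 ^ j * (d choose j) * num_compositions m j)"
proof (induction d arbitrary: m)
  case 0
  have "l1_sphere 0 m = (if m = 0 then {[]} else {})"
    by (auto simp: l1_sphere_def)
  then show ?case
    by simp
next
  case (Suc d)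
  have "(\<Sum>j\<le>Suc d. 2 ^ j * (Suc d choose j) * num_compositions m j)
      = num_compositions m 0 + (\<Sum>j\<le>d. 2 ^ Suc j * (d choose Suc j) * num_compositions m (Suc j))
        + (\<Sum>j\<le>d. 2 ^ Suc j * (d choose j) * num_compositions m (Suc j))"
    by (subst sum.atMost_Suc_shift)
       (simp add: sum.distrib algebra_simps del: num_compositions.simps(2) sum.atMost_Suc)
  also have "num_compositions m 0 + (\<Sum>j\<le>d. 2 ^ Suc j * (d choose Suc j) * num_compositions m (Suc j))
      = (\<Sum>j\<le>Suc d. 2 ^ j * (d choose j) * num_compositions m j)"
    by (simp only: sum.atMost_Suc_shift power_0 binomial_n_0 mult_1_left)
  also have "\<dots> = card (l1_sphere d m)"
    by (simp add: Suc.IH binomial_eq_0 del: num_compositions.simps)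
  also have "(\<Sum>j\<le>d. 2 ^ Suc j * (d choose j) * num_compositions m (Suc j))
      = 2 * (\<Sum>t<m. card (l1_sphere d t))"
    by (simp add: Suc.IH sum_distrib_left sum.swap[of _ "{..<m}"] mult.assoc)
  finally show ?case
    by (simp add: card_l1_sphere_Suc)
qed

lemma primitive_has_nonzero: "primitive x \<Longrightarrow> \<exists>c\<in>set x. c \<noteq> 0"
  using Gcd_0_iff[of "set x"] by (auto simp: primitive_def)

lemma primitive_uminus [simp]: "primitive (map uminus x) \<longleftrightarrow> primitive x"
  by (simp add: primitive_def)

lemma primitive_iff_no_prime_factor_divides:
  assumes "x \<in> l1_sphere d n" "n > 0"
  shows "primitive x \<longleftrightarrow> (\<forall>p\<in>prime_factors n. \<not> (\<forall>c\<in>set x. int p dvd c))"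
proof -
  define g where "g = Gcd (set x)"
  have dvd_g: "int p dvd g \<longleftrightarrow> (\<forall>c\<in>set x. int p dvd c)" for p
    by (simp add: g_def dvd_Gcd_iff)
  have "g dvd int n"
    using assms(1) dvd_norm1[of x g] by (simp add: g_def l1_sphere_def)
  then have "g \<noteq> 0"
    using assms(2) by auto
  then have "g > 0"
    by (simp add: g_def less_le)
  show ?thesis
  proof
    assume "primitive x"
    then show "\<forall>p\<in>prime_factors n. \<not> (\<forall>c\<in>set x. int p dvd c)"
      by (auto simp: primitive_def in_prime_factors_iff simp flip: g_def dvd_g)
  next
    assume no_prime: "\<forall>p\<in>prime_factors n. \<not> (\<forall>c\<in>set x. int p dvd c)"
    show "primitive x"
    proof (rule ccontr)
      assume "\<not> primitive x"
      then have "nat g \<noteq> 1"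
        using \<open>g > 0\<close> by (simp add: primitive_def g_def)
      then obtain p where p: "prime p" "p dvd nat g"
        using prime_factor_nat by blast
      then have "int p dvd g"
        using \<open>g > 0\<close> by (simp add: dvd_nat_abs_iff[symmetric])
      moreover from this have "int p dvd int n"
        using \<open>g dvd int n\<close> by (rule dvd_trans)
      then have "p \<in> prime_factors n"
        using p assms(2) by (simp add: in_prime_factors_iff)
      ultimately show False
        using no_prime dvd_g by blast
    qed
  qed
qed

lemma card_multiples_in_l1_sphere:
  assumes "k > 0" "k dvd n"
  shows "card {x\<in>l1_sphere d n. \<forall>c\<in>set x. int k dvd c} = card (l1_sphere d (n div k))"
proof -
  have "{x\<in>l1_sphere d n. \<forall>c\<in>set x. int k dvd c} = map ((*) (int k)) ` l1_sphere d (n div k)"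
  proof (intro equalityI subsetI)
    fix x assume x: "x \<in> {x\<in>l1_sphere d n. \<forall>c\<in>set x. int k dvd c}"
    define y where "y = map (\<lambda>c. c div int k) x"
    have "map ((*) (int k)) y = x"
      using x by (simp add: y_def map_idI)
    moreover have "int k * norm1 y = int k * int (n div k)"
      using x assms norm1_scale[of "int k" y] \<open>map ((*) (int k)) y = x\<close>
      by (simp add: l1_sphere_def flip: of_nat_mult)
    then have "y \<in> l1_sphere d (n div k)"
      using x assms(1) by (simp add: l1_sphere_def y_def)
    ultimately show "x \<in> map ((*) (int k)) ` l1_sphere d (n div k)"
      by blast
  qed (use assms norm1_scale in \<open>auto simp: l1_sphere_def simp flip: of_nat_mult\<close>)
  moreover have "inj_on (map ((*) (int k))) (l1_sphere d (n div k))"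
    using assms(1) by (auto intro!: inj_on_subset[OF inj_mapI] simp: inj_def)
  ultimately show ?thesis
    by (simp add: card_image)
qed

lemma card_primitive_l1_sphere_inclusion_exclusion:
  assumes "n > 0"
  shows "real (card {x\<in>l1_sphere d n. primitive x})
           = (\<Sum>U\<in>Pow (prime_factors n). (-1) ^ card U * real (card (l1_sphere d (n div \<Prod>U))))"
proof -
  have "{x\<in>l1_sphere d n. primitive x}
      = {x\<in>l1_sphere d n. \<forall>p\<in>prime_factors n. \<not> (\<forall>c\<in>set x. int p dvd c)}"
    using primitive_iff_no_prime_factor_divides[OF _ assms] by blast
  then have "real (card {x\<in>l1_sphere d n. primitive x})
      = (\<Sum>U\<in>Pow (prime_factors n). (-1) ^ card U
           * real (card {x\<in>l1_sphere d n. \<forall>p\<in>U. \<forall>c\<in>set x. int p dvd c}))"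
    by (simp only:) (rule card_avoiding_inclusion_exclusion[OF finite_l1_sphere], simp)
  also have "\<dots> = (\<Sum>U\<in>Pow (prime_factors n). (-1) ^ card U * real (card (l1_sphere d (n div \<Prod>U))))"
  proof (rule sum.cong)
    fix U assume U: "U \<in> Pow (prime_factors n)"
    have "int (\<Prod>U) dvd c \<longleftrightarrow> \<Prod>U dvd nat \<bar>c\<bar>" for c
      by (rule dvd_nat_abs_iff[symmetric])
    also have "\<dots> c \<longleftrightarrow> (\<forall>p\<in>U. int p dvd c)" for c
      using U finite_subset[of U] by (subst prod_primes_dvd_iff) (auto simp: dvd_nat_abs_iff)
    finally have "{x\<in>l1_sphere d n. \<forall>p\<in>U. \<forall>c\<in>set x. int p dvd c}
        = {x\<in>l1_sphere d n. \<forall>c\<in>set x. int (\<Prod>U) dvd c}"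
      by auto
    moreover have "card {x\<in>l1_sphere d n. \<forall>c\<in>set x. int (\<Prod>U) dvd c} = card (l1_sphere d (n div \<Prod>U))"
      using U by (intro card_multiples_in_l1_sphere prod_subset_prime_factors_dvd prod_pos)
                 (auto simp: in_prime_factors_iff prime_gt_0_nat)
    ultimately show "(-1) ^ card U * real (card {x\<in>l1_sphere d n. \<forall>p\<in>U. \<forall>c\<in>set x. int p dvd c})
        = (-1) ^ card U * real (card (l1_sphere d (n div \<Prod>U)))"
      by (simp only:)
  qed simp
  finally show ?thesis .
qed

lemma c_psi_eq_alternating_sum:
  assumes "n > 0" "j \<ge> 1"
  shows "c_psi n j = (\<Sum>U\<in>Pow (prime_factors n). (-1) ^ card U * real (num_compositions (n div \<Prod>U) j))"
proof -
  have "c_psi n j = (\<Sum>U\<in>Pow (prime_factors n). (-1) ^ card U *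
      (1 / fact (j - 1) * (\<Sum>i=1..j. real_of_int (stirling_s j i) * real (n div \<Prod>U) ^ (i - 1))))"
    unfolding c_psi_def jordan_eq_alternating_sum[OF assms(1)]
    by (simp add: sum_distrib_left mult.assoc mult.left_commute) (rule sum.swap)
  also have "\<dots> = (\<Sum>U\<in>Pow (prime_factors n). (-1) ^ card U * real (num_compositions (n div \<Prod>U) j))"
  proof (rule sum.cong)
    fix U assume "U \<in> Pow (prime_factors n)"
    then have "n div \<Prod>U \<ge> 1"
      using assms(1) div_prod_subset_prime_factors_pos[of n U] by simp
    then show "(-1) ^ card U *
        (1 / fact (j - 1) * (\<Sum>i=1..j. real_of_int (stirling_s j i) * real (n div \<Prod>U) ^ (i - 1)))
        = (-1) ^ card U * real (num_compositions (n div \<Prod>U) j)"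
      using assms(2) by (simp only: stirling_s_poly_eq_binomial num_compositions_eq_binomial)
  qed simp
  finally show ?thesis .
qed

lemma c_psi_eq_0:
  assumes "n > 0" "n < j"
  shows "c_psi n j = 0"
proof -
  have vanish: "num_compositions (n div \<Prod>U) j = 0" if "U \<subseteq> prime_factors n" for U
  proof -
    have "n div \<Prod>U > 0"
      using assms(1) that by (rule div_prod_subset_prime_factors_pos)
    moreover have "n div \<Prod>U - 1 < j - 1"
      using div_le_dividend[of n "\<Prod>U"] assms by linarith
    ultimately show ?thesis
      using assms(2) by (simp add: num_compositions_eq_binomial)
  qed
  have "c_psi n j = (\<Sum>U\<in>Pow (prime_factors n). (-1) ^ card U * real (num_compositions (n div \<Prod>U) j))"
    using assms by (intro c_psi_eq_alternating_sum) auto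
  also have "\<dots> = 0"
    using vanish by (intro sum.neutral) simp
  finally show ?thesis .
qed

lemma card_primitive_l1_sphere:
  assumes "n > 0"
  shows "real (card {x\<in>l1_sphere d n. primitive x}) = (\<Sum>j=1..d. 2 ^ j * real (d choose j) * c_psi n j)"
proof -
  have sphere: "real (card (l1_sphere d m)) = (\<Sum>j=1..d. 2 ^ j * real (d choose j) * real (num_compositions m j))"
    if "m > 0" for m
  proof -
    have "{..d} = insert 0 {1..d}"
      by auto
    then show ?thesis
      using that by (simp add: card_l1_sphere del: num_compositions.simps(2))
  qed
  have "(\<Sum>j=1..d. 2 ^ j * real (d choose j) * c_psi n j)
      = (\<Sum>j=1..d. 2 ^ j * real (d choose j) *
           (\<Sum>U\<in>Pow (prime_factors n). (-1) ^ card U * real (num_compositions (n div \<Prod>U) j)))"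
    using assms by (simp add: c_psi_eq_alternating_sum)
  also have "\<dots> = (\<Sum>U\<in>Pow (prime_factors n). (-1) ^ card U *
      (\<Sum>j=1..d. 2 ^ j * real (d choose j) * real (num_compositions (n div \<Prod>U) j)))"
    by (simp add: sum_distrib_left mult.assoc mult.left_commute) (rule sum.swap)
  also have "\<dots> = (\<Sum>U\<in>Pow (prime_factors n). (-1) ^ card U * real (card (l1_sphere d (n div \<Prod>U))))"
    using assms by (intro sum.cong refl) (simp add: sphere div_prod_subset_prime_factors_pos)
  also have "\<dots> = real (card {x\<in>l1_sphere d n. primitive x})"
    using assms by (rule card_primitive_l1_sphere_inclusion_exclusion[symmetric])
  finally show ?thesis ..
qed

definition primitive_ball :: "nat \<Rightarrow> nat \<Rightarrow> int list set" where
  "primitive_ball d p = {x. length x = d \<and> norm1 x \<le> int p \<and> primitive x}"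

lemma primitive_ball_eq_UN:
  "primitive_ball d p = (\<Union>n\<in>{1..p}. {x\<in>l1_sphere d n. primitive x})"
proof (intro equalityI subsetI)
  fix x assume x: "x \<in> primitive_ball d p"
  then have "norm1 x > 0"
    by (intro norm1_pos primitive_has_nonzero) (simp add: primitive_ball_def)
  with x show "x \<in> (\<Union>n\<in>{1..p}. {x\<in>l1_sphere d n. primitive x})"
    by (auto simp: primitive_ball_def l1_sphere_def intro!: bexI[of _ "nat (norm1 x)"])
qed (auto simp: primitive_ball_def l1_sphere_def)

lemma finite_primitive_ball: "finite (primitive_ball d p)"
  by (simp add: primitive_ball_eq_UN finite_l1_sphere)

lemma length_primitive_ball: "x \<in> primitive_ball d p \<Longrightarrow> length x = d"
  by (simp add: primitive_ball_def)

lemma primitive_ball_mset_closed: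
  "x \<in> primitive_ball d p \<Longrightarrow> mset y = mset x \<Longrightarrow> y \<in> primitive_ball d p"
  using norm1_mset_eq[of y x] mset_eq_setD[of y x] mset_eq_length[of y x]
  by (simp add: primitive_ball_def primitive_def)

lemma sum_primitive_ball:
  fixes g :: "nat \<Rightarrow> real"
  shows "(\<Sum>x\<in>primitive_ball d p. g (nat (norm1 x)))
           = (\<Sum>j=1..d. 2 ^ j * real (d choose j) * (\<Sum>i=j..p. g i * c_psi i j))"
proof -
  have "(\<Sum>x\<in>primitive_ball d p. g (nat (norm1 x)))
      = (\<Sum>n=1..p. \<Sum>x\<in>{x\<in>l1_sphere d n. primitive x}. g (nat (norm1 x)))"
    unfolding primitive_ball_eq_UN
    by (rule sum.UNION_disjoint) (simp_all add: finite_l1_sphere, auto simp: l1_sphere_def)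
  also have "\<dots> = (\<Sum>n=1..p. g n * real (card {x\<in>l1_sphere d n. primitive x}))"
    by (intro sum.cong refl) (simp add: l1_sphere_def)
  also have "\<dots> = (\<Sum>n=1..p. g n * (\<Sum>j=1..d. 2 ^ j * real (d choose j) * c_psi n j))"
    by (intro sum.cong refl) (simp add: card_primitive_l1_sphere)
  also have "\<dots> = (\<Sum>j=1..d. 2 ^ j * real (d choose j) * (\<Sum>i=1..p. g i * c_psi i j))"
    by (simp add: sum_distrib_left mult.assoc mult.left_commute) (rule sum.swap)
  also have "\<dots> = (\<Sum>j=1..d. 2 ^ j * real (d choose j) * (\<Sum>i=j..p. g i * c_psi i j))"
    by (intro sum.cong refl arg_cong2[where f = "(*)"] sum.mono_neutral_right) (auto simp: c_psi_eq_0)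
  finally show ?thesis .
qed

lemma first_nonzero_pos_Cons:
  "first_nonzero_pos (a # x) \<longleftrightarrow> a > 0 \<or> a = 0 \<and> first_nonzero_pos x"
proof
  assume "first_nonzero_pos (a # x)"
  then obtain k where k: "k < Suc (length x)" "\<forall>i<k. (a # x) ! i = 0" "(a # x) ! k > 0"
    by (auto simp: first_nonzero_pos_def)
  show "a > 0 \<or> a = 0 \<and> first_nonzero_pos x"
  proof (cases k)
    case (Suc k')
    then have "a = 0" "k' < length x" "\<forall>i<k'. x ! i = 0" "x ! k' > 0"
      using k by (auto dest: spec[of _ 0] spec[of _ "Suc _"])
    then show ?thesis
      by (auto simp: first_nonzero_pos_def)
  qed (use k in simp)
next
  assume "a > 0 \<or> a = 0 \<and> first_nonzero_pos x"
  then show "first_nonzero_pos (a # x)"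
  proof
    assume "a > 0"
    then show ?thesis
      by (auto simp: first_nonzero_pos_def intro!: exI[of _ 0])
  next
    assume "a = 0 \<and> first_nonzero_pos x"
    then obtain k where "a = 0" "k < length x" "\<forall>i<k. x ! i = 0" "x ! k > 0"
      by (auto simp: first_nonzero_pos_def)
    then show ?thesis
      by (auto simp: first_nonzero_pos_def nth_Cons' intro!: exI[of _ "Suc k"])
  qed
qed

lemma first_nonzero_pos_uminus:
  "\<exists>c\<in>set x. c \<noteq> 0 \<Longrightarrow> first_nonzero_pos (map uminus x) \<longleftrightarrow> \<not> first_nonzero_pos x"
  by (induction x) (auto simp: first_nonzero_pos_Cons)

lemma sum_eq_twice_sum_first_nonzero_pos:
  fixes f :: "int list \<Rightarrow> 'a::comm_semiring_1"
  assumes "finite X"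
    and "\<And>x. x \<in> X \<Longrightarrow> map uminus x \<in> X"
    and "\<And>x. x \<in> X \<Longrightarrow> \<exists>c\<in>set x. c \<noteq> 0"
    and "\<And>x. x \<in> X \<Longrightarrow> f (map uminus x) = f x"
  shows "(\<Sum>x\<in>X. f x) = 2 * (\<Sum>x\<in>{x\<in>X. first_nonzero_pos x}. f x)"
proof -
  define H where "H = {x\<in>X. first_nonzero_pos x}"
  have X_eq: "X = H \<union> map uminus ` H"
  proof (intro equalityI subsetI)
    fix x assume "x \<in> X"
    then have "x \<in> H \<or> map uminus x \<in> H"
      using assms(2,3) first_nonzero_pos_uminus[of x] by (auto simp: H_def)
    moreover have "x = map uminus (map uminus x)"
      by (simp add: map_idI)
    ultimately show "x \<in> H \<union> map uminus ` H"
      by blast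
  qed (use assms(2) in \<open>auto simp: H_def\<close>)
  have "H \<inter> map uminus ` H = {}"
    using assms(3) first_nonzero_pos_uminus by (fastforce simp: H_def)
  then have "(\<Sum>x\<in>X. f x) = (\<Sum>x\<in>H. f x) + (\<Sum>x\<in>map uminus ` H. f x)"
    using assms(1) by (subst X_eq, intro sum.union_disjoint) (simp_all add: H_def)
  also have "(\<Sum>x\<in>map uminus ` H. f x) = (\<Sum>x\<in>H. f (map uminus x))"
    by (rule sum.reindex_cong[of "map uminus"]) (auto intro: inj_on_subset[OF inj_mapI] simp: inj_def)
  also have "\<dots> = (\<Sum>x\<in>H. f x)"
    using assms(4) by (simp add: H_def)
  finally show ?thesis
    by (simp add: H_def mult_2)
qed

lemma sum_nth_eq_sum_nth_0:
  assumes "i < d"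
    and "\<And>x. x \<in> X \<Longrightarrow> length x = d"
    and "\<And>x y. x \<in> X \<Longrightarrow> mset y = mset x \<Longrightarrow> y \<in> X"
  shows "(\<Sum>x\<in>X. f (x ! i)) = (\<Sum>x\<in>X. f (x ! 0))"
proof -
  define \<sigma> where "\<sigma> = Transposition.transpose 0 i"
  have \<sigma>: "\<sigma> permutes {..<length x}" if "x \<in> X" for x
    using assms(1) assms(2)[OF that] by (auto simp: \<sigma>_def intro: permutes_swap_id)
  have swap_swap: "permute_list \<sigma> (permute_list \<sigma> x) = x" if "x \<in> X" for x
  proof (rule nth_equalityI)
    fix k assume "k < length (permute_list \<sigma> (permute_list \<sigma> x))"
    moreover from this have "\<sigma> k < length x"
      using permutes_in_image[OF \<sigma>[OF that]] by simp
    ultimately show "permute_list \<sigma> (permute_list \<sigma> x) ! k = x ! k"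
      using \<sigma>[OF that] by (simp add: permute_list_nth \<sigma>_def)
  qed simp
  have swap_in: "permute_list \<sigma> x \<in> X" if "x \<in> X" for x
    by (rule assms(3)[OF that]) (simp add: \<sigma>[OF that])
  have swap_nth: "permute_list \<sigma> x ! 0 = x ! i" if "x \<in> X" for x
    using \<sigma>[OF that] assms(1) assms(2)[OF that] by (simp add: permute_list_nth \<sigma>_def)
  show ?thesis
    by (rule sum.reindex_bij_witness[of _ "permute_list \<sigma>" "permute_list \<sigma>"])
       (simp_all add: swap_swap swap_in swap_nth)
qed

lemma BP_conv_primitive_ball: "BP d p = {x\<in>primitive_ball d p. first_nonzero_pos x}"
  by (auto simp: BP_def primitive_ball_def norm1_eq_sum_nth)

lemma sum_primitive_ball_eq_twice_sum_BP:
  fixes f :: "int list \<Rightarrow> 'a::comm_semiring_1"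
  assumes "\<And>x. length x = d \<Longrightarrow> f (map uminus x) = f x"
  shows "(\<Sum>x\<in>primitive_ball d p. f x) = 2 * (\<Sum>x\<in>BP d p. f x)"
  unfolding BP_conv_primitive_ball
  by (rule sum_eq_twice_sum_first_nonzero_pos[OF finite_primitive_ball])
     (auto simp: primitive_ball_def assms primitive_has_nonzero)

lemma card_BP:
  "real (card (BP d p)) = 1 / 2 * (\<Sum>j=1..d. 2 ^ j * real (d choose j) * (\<Sum>i=j..p. c_psi i j))"
  using sum_primitive_ball[of "\<lambda>_. 1" d p] sum_primitive_ball_eq_twice_sum_BP[of d "\<lambda>_. 1::real" p]
  by simp

lemma sum_abs_nth_primitive_ball:
  "i < d \<Longrightarrow> (\<Sum>x\<in>primitive_ball d p. \<bar>x ! i\<bar>) = 2 * (\<Sum>x\<in>BP d p. \<bar>x ! i\<bar>)"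
  by (rule sum_primitive_ball_eq_twice_sum_BP) simp

lemma sum_abs_nth_BP:
  assumes "i < d"
  shows "(\<Sum>x\<in>BP d p. \<bar>x ! i\<bar>) = (\<Sum>x\<in>BP d p. \<bar>x ! 0\<bar>)"
proof -
  have "(\<Sum>x\<in>primitive_ball d p. \<bar>x ! i\<bar>) = (\<Sum>x\<in>primitive_ball d p. \<bar>x ! 0\<bar>)"
    by (rule sum_nth_eq_sum_nth_0[OF assms length_primitive_ball primitive_ball_mset_closed])
  then show ?thesis
    using assms by (simp add: sum_abs_nth_primitive_ball)
qed

lemma kappa_BP_eq_sum_abs_nth_0:
  assumes "d \<ge> 1"
  shows "kappa d (BP d p) = (\<Sum>x\<in>BP d p. \<bar>x ! 0\<bar>)"
proof -
  have "(\<lambda>i. \<Sum>x\<in>BP d p. \<bar>x ! i\<bar>) ` {..<d} = {\<Sum>x\<in>BP d p. \<bar>x ! 0\<bar>}"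
  proof (intro equalityI subsetI)
    fix y assume "y \<in> (\<lambda>i. \<Sum>x\<in>BP d p. \<bar>x ! i\<bar>) ` {..<d}"
    then obtain i where "i < d" "y = (\<Sum>x\<in>BP d p. \<bar>x ! i\<bar>)"
      by auto
    then show "y \<in> {\<Sum>x\<in>BP d p. \<bar>x ! 0\<bar>}"
      using sum_abs_nth_BP[of i d p] by simp
  qed (use assms in \<open>auto intro!: rev_image_eqI[of 0]\<close>)
  then show ?thesis
    by (simp add: kappa_def)
qed

lemma sum_norm1_primitive_ball:
  "(\<Sum>x\<in>primitive_ball d p. norm1 x) = 2 * int d * (\<Sum>x\<in>BP d p. \<bar>x ! 0\<bar>)"
proof -
  have "(\<Sum>x\<in>primitive_ball d p. norm1 x) = (\<Sum>i<d. \<Sum>x\<in>primitive_ball d p. \<bar>x ! i\<bar>)"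
    by (subst sum.swap) (simp add: norm1_eq_sum_nth primitive_ball_def)
  also have "\<dots> = (\<Sum>i<d. 2 * (\<Sum>x\<in>BP d p. \<bar>x ! 0\<bar>))"
  proof (rule sum.cong)
    fix i assume "i \<in> {..<d}"
    then show "(\<Sum>x\<in>primitive_ball d p. \<bar>x ! i\<bar>) = 2 * (\<Sum>x\<in>BP d p. \<bar>x ! 0\<bar>)"
      using sum_abs_nth_primitive_ball[of i d p] sum_abs_nth_BP[of i d p] by simp
  qed simp
  finally show ?thesis
    by simp
qed

lemma kappa_BP:
  assumes "d \<ge> 1"
  shows "real_of_int (kappa d (BP d p))
           = 1 / (2 * real d) * (\<Sum>j=1..d. 2 ^ j * real (d choose j) * (\<Sum>i=j..p. real i * c_psi i j))"
proof -
  have "2 * real d * real_of_int (kappa d (BP d p)) = real_of_int (\<Sum>x\<in>primitive_ball d p. norm1 x)"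
    using assms by (simp add: sum_norm1_primitive_ball kappa_BP_eq_sum_abs_nth_0)
  also have "\<dots> = (\<Sum>x\<in>primitive_ball d p. real (nat (norm1 x)))"
    by (simp add: norm1_nonneg)
  also have "\<dots> = (\<Sum>j=1..d. 2 ^ j * real (d choose j) * (\<Sum>i=j..p. real i * c_psi i j))"
    by (rule sum_primitive_ball)
  finally have formula: "2 * real d * real_of_int (kappa d (BP d p))
      = (\<Sum>j=1..d. 2 ^ j * real (d choose j) * (\<Sum>i=j..p. real i * c_psi i j))" .
  show ?thesis
    unfolding formula[symmetric] using assms by simp
qed

theorem theorem1p1:
  fixes d p :: nat
  assumes "d \<ge> 1" and "p \<ge> 1"
  shows "(real (card (BP d p)) =
           1 / 2 * (\<Sum>j=1..d. 2 ^ j * real (d choose j) * (\<Sum>i=j..p. c_psi i j))) \<and>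
         (real_of_int (kappa d (BP d p)) =
           1 / (2 * real d) * (\<Sum>j=1..d. 2 ^ j * real (d choose j) * (\<Sum>i=j..p. real i * c_psi i j)))"
  using card_BP kappa_BP[OF assms(1)] by (rule conjI)

end
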